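(* Let $G$ be a group, let $(\Gamma,\psi)$ be a $G$-gain graph on $n$ vertices, let $\pi$ be a unitary representation of $G$, and let $\alpha=\{C_0,C_1,\dots,C_{2k}\}$ be a $\pi$-WQH partition of the vertex set of $\Gamma$. Let $(\Gamma^\alpha,\psi^\alpha)$ be the gain graph obtained from $(\Gamma,\psi)$ and $\alpha$ as described in the context, and let $Q_\alpha$ be the matrix associated with $\alpha$. Then, with vertices ordered as $C_0,C_1,\dots,C_{2k}$, $$\pi(A_{(\Gamma^\alpha,\psi^\alpha)})=\pi(Q_\alpha)\,\pi(A_{(\Gamma,\psi)})\,\pi(Q_\alpha),$$ and in particular $(\Gamma,\psi)$ and $(\Gamma^\alpha,\psi^\alpha)$ are $\pi$-cospectral.
   Context: A $G$-gain graph $(\Gamma,\psi)$ consists of a directed graph $\Gamma=(V,A)$ in which every arc $(u,w)$ has its reverse $(w,u)$ (no loops), and a gain function $\psi:A\to G$ with $\psi(w,u)=\psi(u,w)^{-1}$. Set $\psi(v,w)=0\in\mathbb{C}G$ when $v,w$ are not adjacent. For $V=\{v_1,\dots,v_n\}$, the adjacency matrix $A_{(\Gamma,\psi)}\in M_n(\mathbb{C}G)$ has $(i,j)$ entry $\psi(v_i,v_j)$ if $v_i\sim v_j$ and $0$ otherwise; $\mathbb{C}G$ is the complex group algebra with neutral element $1_G$. A unitary representation of degree $d$ is a group homomorphism $\pi:G\to U_d(\mathbb{C})$; it is extended linearly to an algebra homomorphism $\pi:\mathbb{C}G\to M_d(\mathbb{C})$, and to matrices $M\in M_{a,b}(\mathbb{C}G)$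 by replacing each entry $M_{i,j}$ by the $d\times d$ block $\pi(M_{i,j})$. The matrix $\pi(A_{(\Gamma,\psi)})$ is Hermitian; its spectrum is the $\pi$-spectrum of $(\Gamma,\psi)$, and two gain graphs are $\pi$-cospectral if they have the same $\pi$-spectrum. Given a partition $\alpha=\{C_0,\dots,C_{2k}\}$ of $V$, let $\Psi_i(v)=\sum_{w\in C_i,\,w\sim v}\psi(v,w)\in\mathbb{C}G$. It is a $\pi$-WQH partition if: (1) $|C_i|=|C_{i+1}|$ for every odd $i<2k$; (2) for $i,j\in\{1,\dots,2k\}$ and $v,v'\in C_i$, $\pi(\Psi_j(v))=\pi(\Psi_j(v'))$; (3) for odd $i,j<2k$ and $v\in C_i$, $v'\in C_{i+1}$, $\pi(\Psi_j(v))=\pi(\Psi_{j+1}(v'))$ and $\pi(\Psi_{j+1}(v))=\pi(\Psi_j(v'))$; (4) for every $v\in C_0$ and odd $i<2k$, either (a) $\Psi_i(v)=\Psi_{i+1}(v)$, or (b) $\Psi_i(v)=|C_i|g_1$ and $\Psi_{i+1}(v)=|C_{i+1}|g_2$ for some distinct $g_1,g_2\in G\cup\{0\}$. The gain graph $(\Gamma^\alpha,\psi^\alpha)$ on the same vertex set is defined by (with $\psi^\alpha(v,w)=0$ meaning non-adjacency): $\psi^\alpha(v,w)=\psi(v,w)$ for $v,w\in C_1\cup\dots\cup C_{2k}$ and for $v,w\in C_0$; for $v\in C_0$ and odd $i<2k$ with $\Psi_i(v)=\Psi_{i+1}(v)$, $\psi^\alpha(v,w)=\psi(v,w)$ for $w\in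 C_i\cup C_{i+1}$; for $v\in C_0$ and odd $i<2k$ in case (b) with $g_1,g_2$, $\psi^\alpha(v,w)=g_2$ for $w\in C_i$ and $\psi^\alpha(v,w)=g_1$ for $w\in C_{i+1}$ (reversed arcs get inverse gains). For $m\ge1$ let $Q_m=\begin{pmatrix} I_m-\frac1m J_m & \frac1m J_m\\ \frac1m J_m & I_m-\frac1m J_m\end{pmatrix}\in M_{2m}(\mathbb{C}G)$, with $I_m$ the identity (diagonal entries $1_G$) and $J_m$ the all-$1_G$ matrix. With $m_t=|C_{2t-1}|=|C_{2t}|$, $t=1,\dots,k$, let $Q_\alpha=\mathrm{diag}(I_{|C_0|},Q_{m_1},\dots,Q_{m_k})\in M_n(\mathbb{C}G)$. *)

theory Defs
  imports "HOL-Algebra.Group" "Jordan_Normal_Form.Matrix" "Jordan_Normal_Form.Char_Poly"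
    "HOL-Computational_Algebra.Polynomial"
begin

(* A G-gain graph is encoded by gam :: nat => nat => 'g option:
   gam v w = Some g  means v ~ w with gain psi(v,w) = g;  gam v w = None means
   non-adjacent (the paper's convention psi(v,w) = 0). *)

definition gain_graph :: "('g, 'b) monoid_scheme \<Rightarrow> nat \<Rightarrow> (nat \<Rightarrow> nat \<Rightarrow> 'g option) \<Rightarrow> bool" where
  "gain_graph G n gam \<longleftrightarrow>
     (\<forall>v w. (v \<ge> n \<or> w \<ge> n) \<longrightarrow> gam v w = None) \<and>
     (\<forall>v. gam v v = None) \<and>
     (\<forall>v w g. gam v w = Some g \<longrightarrow> g \<in> carrier G \<and> gam w v = Some (inv\<^bsub>G\<^esub> g))"

(* Complex group algebra CG: finitely supported functions 'g => complex. *)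
type_synonym 'g cgalg = "'g \<Rightarrow> complex"

definition delta :: "'g \<Rightarrow> 'g cgalg" where
  "delta g = (\<lambda>h. if h = g then 1 else 0)"

definition emb :: "'g option \<Rightarrow> 'g cgalg" where
  "emb x = (case x of None \<Rightarrow> (\<lambda>_. 0) | Some g \<Rightarrow> delta g)"

definition cg_smult :: "complex \<Rightarrow> 'g cgalg \<Rightarrow> 'g cgalg" where
  "cg_smult c x = (\<lambda>h. c * x h)"

definition adj_mat :: "(nat \<Rightarrow> nat \<Rightarrow> 'g option) \<Rightarrow> nat \<Rightarrow> nat \<Rightarrow> 'g cgalg" where
  "adj_mat gam i j = emb (gam i j)"

definition conj_transpose :: "complex mat \<Rightarrow> complex mat" where
  "conj_transpose U = mat (dim_col U) (dim_row U) (\<lambda>(i,j). cnj (U $$ (j,i)))"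

definition unitary_rep :: "('g, 'b) monoid_scheme \<Rightarrow> nat \<Rightarrow> ('g \<Rightarrow> complex mat) \<Rightarrow> bool" where
  "unitary_rep G d rho \<longleftrightarrow>
     (\<forall>g\<in>carrier G. rho g \<in> carrier_mat d d \<and> rho g * conj_transpose (rho g) = 1\<^sub>m d) \<and>
     (\<forall>g\<in>carrier G. \<forall>h\<in>carrier G. rho (g \<otimes>\<^bsub>G\<^esub> h) = rho g * rho h)"

definition pi_cg :: "('g, 'b) monoid_scheme \<Rightarrow> nat \<Rightarrow> ('g \<Rightarrow> complex mat) \<Rightarrow> 'g cgalg \<Rightarrow> complex mat" where
  "pi_cg G d rho x = mat d d (\<lambda>(a,b). \<Sum>g\<in>{g\<in>carrier G. x g \<noteq> 0}. x g * (rho g $$ (a,b)))"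

definition pi_mat :: "('g, 'b) monoid_scheme \<Rightarrow> nat \<Rightarrow> ('g \<Rightarrow> complex mat) \<Rightarrow> nat \<Rightarrow> (nat \<Rightarrow> nat \<Rightarrow> 'g cgalg) \<Rightarrow> complex mat" where
  "pi_mat G d rho n M = mat (n*d) (n*d) (\<lambda>(i,j). pi_cg G d rho (M (i div d) (j div d)) $$ (i mod d, j mod d))"

definition pi_spectrum :: "('g, 'b) monoid_scheme \<Rightarrow> nat \<Rightarrow> ('g \<Rightarrow> complex mat) \<Rightarrow> nat \<Rightarrow> (nat \<Rightarrow> nat \<Rightarrow> 'g option) \<Rightarrow> complex multiset" where
  "pi_spectrum G d rho n gam = proots (char_poly (pi_mat G d rho n (adj_mat gam)))"

definition pi_cospectral where
  "pi_cospectral G d rho n gam1 gam2 \<longleftrightarrow> pi_spectrum G d rho n gam1 = pi_spectrum G d rho n gam2"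

(* Ordered partition: C_0 = {0..<c0}; for t < k = length ms, with m_t = ms!t,
   C_(2t+1) and C_(2t+2) are consecutive blocks of size m_t (vertices ordered as C_0, C_1, ..., C_2k). *)
definition offs :: "nat \<Rightarrow> nat list \<Rightarrow> nat \<Rightarrow> nat" where
  "offs c0 ms t = c0 + 2 * sum_list (take t ms)"

definition cls :: "nat \<Rightarrow> nat list \<Rightarrow> nat \<Rightarrow> nat set" where
  "cls c0 ms i =
     (if i = 0 then {0..<c0}
      else if odd i then {offs c0 ms ((i-1) div 2) ..< offs c0 ms ((i-1) div 2) + ms ! ((i-1) div 2)}
      else {offs c0 ms ((i-2) div 2) + ms ! ((i-2) div 2) ..< offs c0 ms ((i-2) div 2) + 2 * ms ! ((i-2) div 2)})"

definition Psi :: "nat \<Rightarrow> nat list \<Rightarrow> (nat \<Rightarrow> nat \<Rightarrow> 'g option) \<Rightarrow> nat \<Rightarrow> nat \<Rightarrow> 'g cgalg" where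
  "Psi c0 ms gam i v = (\<lambda>h. \<Sum>w\<in>cls c0 ms i. emb (gam v w) h)"

definition caseb :: "('g, 'b) monoid_scheme \<Rightarrow> nat \<Rightarrow> nat list \<Rightarrow> (nat \<Rightarrow> nat \<Rightarrow> 'g option) \<Rightarrow> nat \<Rightarrow> nat \<Rightarrow> 'g option \<Rightarrow> 'g option \<Rightarrow> bool" where
  "caseb G c0 ms gam t v g1 g2 \<longleftrightarrow>
     g1 \<noteq> g2 \<and> set_option g1 \<subseteq> carrier G \<and> set_option g2 \<subseteq> carrier G \<and>
     Psi c0 ms gam (2*t+1) v = cg_smult (of_nat (ms ! t)) (emb g1) \<and>
     Psi c0 ms gam (2*t+2) v = cg_smult (of_nat (ms ! t)) (emb g2)"

definition pi_WQH :: "('g, 'b) monoid_scheme \<Rightarrow> nat \<Rightarrow> ('g \<Rightarrow> complex mat) \<Rightarrow> nat \<Rightarrow> nat list \<Rightarrow> (nat \<Rightarrow> nat \<Rightarrow> 'g option) \<Rightarrow> bool" where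
  "pi_WQH G d rho c0 ms gam \<longleftrightarrow>
     (\<forall>i\<in>{1..2 * length ms}. \<forall>j\<in>{1..2 * length ms}. \<forall>v\<in>cls c0 ms i. \<forall>v'\<in>cls c0 ms i.
        pi_cg G d rho (Psi c0 ms gam j v) = pi_cg G d rho (Psi c0 ms gam j v')) \<and>
     (\<forall>t<length ms. \<forall>s<length ms. \<forall>v\<in>cls c0 ms (2*t+1). \<forall>v'\<in>cls c0 ms (2*t+2).
        pi_cg G d rho (Psi c0 ms gam (2*s+1) v) = pi_cg G d rho (Psi c0 ms gam (2*s+2) v') \<and>
        pi_cg G d rho (Psi c0 ms gam (2*s+2) v) = pi_cg G d rho (Psi c0 ms gam (2*s+1) v')) \<and>
     (\<forall>v\<in>cls c0 ms 0. \<forall>t<length ms.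
        Psi c0 ms gam (2*t+1) v = Psi c0 ms gam (2*t+2) v \<or>
        (\<exists>g1 g2. caseb G c0 ms gam t v g1 g2))"

definition blk :: "nat \<Rightarrow> nat list \<Rightarrow> nat \<Rightarrow> nat" where
  "blk c0 ms w = (THE t. t < length ms \<and> w \<in> cls c0 ms (2*t+1) \<union> cls c0 ms (2*t+2))"

definition new_gain :: "('g, 'b) monoid_scheme \<Rightarrow> nat \<Rightarrow> nat list \<Rightarrow> (nat \<Rightarrow> nat \<Rightarrow> 'g option) \<Rightarrow> nat \<Rightarrow> nat \<Rightarrow> 'g option" where
  "new_gain G c0 ms gam v w =
     (let t = blk c0 ms w in
      if Psi c0 ms gam (2*t+1) v = Psi c0 ms gam (2*t+2) v then gam v w
      else (let (g1, g2) = (SOME (g1, g2). caseb G c0 ms gam t v g1 g2) in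
            if w \<in> cls c0 ms (2*t+1) then g2 else g1))"

definition alpha_graph :: "('g, 'b) monoid_scheme \<Rightarrow> nat \<Rightarrow> nat list \<Rightarrow> (nat \<Rightarrow> nat \<Rightarrow> 'g option) \<Rightarrow> nat \<Rightarrow> nat \<Rightarrow> 'g option" where
  "alpha_graph G c0 ms gam v w =
     (let n = c0 + 2 * sum_list ms in
      if v \<in> cls c0 ms 0 \<and> c0 \<le> w \<and> w < n then new_gain G c0 ms gam v w
      else if w \<in> cls c0 ms 0 \<and> c0 \<le> v \<and> v < n then map_option (\<lambda>g. inv\<^bsub>G\<^esub> g) (new_gain G c0 ms gam w v)
      else gam v w)"

definition Q_coef :: "nat \<Rightarrow> nat list \<Rightarrow> nat \<Rightarrow> nat \<Rightarrow> complex" where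
  "Q_coef c0 ms i j =
     (if i < c0 \<and> j < c0 then (if i = j then 1 else 0)
      else \<Sum>t<length ms.
        (let m = of_nat (ms ! t); P = {offs c0 ms t ..< offs c0 ms t + 2 * ms ! t} in
         if i \<in> P \<and> j \<in> P then
           (if (i \<in> cls c0 ms (2*t+1)) = (j \<in> cls c0 ms (2*t+1))
            then (if i = j then 1 else 0) - 1 / m else 1 / m)
         else 0))"

definition Q_alpha :: "('g, 'b) monoid_scheme \<Rightarrow> nat \<Rightarrow> nat list \<Rightarrow> nat \<Rightarrow> nat \<Rightarrow> 'g cgalg" where
  "Q_alpha G c0 ms i j = cg_smult (Q_coef c0 ms i j) (delta \<one>\<^bsub>G\<^esub>)"

end

(* Let sigma be +1 on C_(2t-1) and -1 on C_(2t) for every pair of classes. Then Q_alpha = I - R,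
   where R is the direct sum of the rank-one blocks sigma sigma^T / m_t; since R^2 = 2R, Q_alpha is
   an involution, and cospectrality follows from the matrix identity.

   Entrywise, for the (a,b) entries F of the blocks of pi(A) one has
   (Q F Q)_ij = F_ij - (R F)_ij - (F R)_ij + (R F R)_ij, and (R F)_ij is a signed sum of column j over
   the pair of classes containing i. Conditions (2) and (3) of a pi-WQH partition say that the signed
   row sums over a pair of classes are sigma_k times a quantity depending only on the two pairs;
   computing the double signed sum of a block of pairs by rows and by columns makes the three
   correction terms cancel when neither i nor j lies in C_0. For i in C_0, condition (4) makes the
   signed sum either 0 (nothing changes) or m (pi(g1) - pi(g2)), and then the correction term swaps
   g1 and g2, which is how psi^alpha is defined. *)

theory Submission
  imports Defs
begin

section \<open>Pairs of classes\<close>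

lemma offs_Suc: "t < length ms \<Longrightarrow> offs c0 ms (Suc t) = offs c0 ms t + 2 * ms ! t"
  by (simp add: offs_def take_Suc_conv_app_nth)

lemma offs_mono:
  assumes "t \<le> t'"
  shows "offs c0 ms t \<le> offs c0 ms t'"
proof -
  have "take t' ms = take t ms @ take (t' - t) (drop t ms)"
    using take_add[of t "t' - t" ms] assms by simp
  then show ?thesis
    by (simp add: offs_def)
qed

lemma offs_ge: "c0 \<le> offs c0 ms t"
  by (simp add: offs_def)

lemma cls_zero: "cls c0 ms 0 = {0..<c0}"
  by (simp add: cls_def)

(* Stated with Suc, the simp normal form of 2*t+1. *)
lemma cls_odd: "cls c0 ms (Suc (2*t)) = {offs c0 ms t ..< offs c0 ms t + ms ! t}"
  by (simp add: cls_def)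

lemma cls_even: "cls c0 ms (Suc (Suc (2*t))) = {offs c0 ms t + ms ! t ..< offs c0 ms t + 2 * ms ! t}"
  by (simp add: cls_def)

lemma finite_cls: "finite (cls c0 ms i)"
  by (simp add: cls_def)

definition pair_block :: "nat \<Rightarrow> nat list \<Rightarrow> nat \<Rightarrow> nat set" where
  "pair_block c0 ms t = {offs c0 ms t ..< offs c0 ms t + 2 * ms ! t}"

lemma pair_block_halves: "pair_block c0 ms t = cls c0 ms (2*t+1) \<union> cls c0 ms (2*t+2)"
  by (auto simp: pair_block_def cls_odd cls_even)

lemma halves_disjoint: "cls c0 ms (2*t+1) \<inter> cls c0 ms (2*t+2) = {}"
  by (auto simp: cls_odd cls_even)

lemma card_cls_odd: "card (cls c0 ms (Suc (2*t))) = ms ! t"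
  by (simp add: cls_odd)

lemma card_cls_even: "card (cls c0 ms (Suc (Suc (2*t)))) = ms ! t"
  by (simp add: cls_even)

lemma pair_block_bounds:
  assumes "t < length ms" "k \<in> pair_block c0 ms t"
  shows "c0 \<le> k" "k < c0 + 2 * sum_list ms"
proof -
  show "c0 \<le> k"
    using assms offs_ge[of c0 ms t] by (auto simp: pair_block_def)
  have "offs c0 ms (Suc t) \<le> offs c0 ms (length ms)"
    using assms by (intro offs_mono) auto
  then show "k < c0 + 2 * sum_list ms"
    using assms offs_Suc[of t ms c0] by (auto simp: pair_block_def offs_def)
qed

lemma not_in_pair_block: "k < c0 \<Longrightarrow> k \<notin> pair_block c0 ms t"
  using offs_ge[of c0 ms t] by (simp add: pair_block_def)

lemma pair_block_unique:
  assumes "t < length ms" "t' < length ms" "k \<in> pair_block c0 ms t" "k \<in> pair_block c0 ms t'"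
  shows "t = t'"
proof -
  have False if "a < b" "b < length ms" "k \<in> pair_block c0 ms a" "k \<in> pair_block c0 ms b" for a b
  proof -
    have "offs c0 ms (Suc a) \<le> offs c0 ms b"
      using that by (intro offs_mono) auto
    then show False
      using that offs_Suc[of a ms c0] by (auto simp: pair_block_def)
  qed
  then show ?thesis
    using assms by (metis linorder_neqE_nat)
qed

lemma pair_block_exists:
  "c0 \<le> k \<Longrightarrow> k < c0 + 2 * sum_list ms \<Longrightarrow> \<exists>t<length ms. k \<in> pair_block c0 ms t"
proof (induction ms arbitrary: c0)
  case Nil
  then show ?case by simp
next
  case (Cons m ms)
  show ?case
  proof (cases "k < c0 + 2 * m")
    case True
    then show ?thesis
      using Cons.prems by (intro exI[of _ 0]) (auto simp: pair_block_def offs_def)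
  next
    case False
    then obtain t where "t < length ms" "k \<in> pair_block (c0 + 2 * m) ms t"
      using Cons.IH[of "c0 + 2 * m"] Cons.prems by auto
    moreover have "pair_block c0 (m # ms) (Suc t) = pair_block (c0 + 2 * m) ms t"
      by (simp add: pair_block_def offs_def algebra_simps)
    ultimately show ?thesis
      by (intro exI[of _ "Suc t"]) auto
  qed
qed

lemma blk_eqI: "t < length ms \<Longrightarrow> k \<in> pair_block c0 ms t \<Longrightarrow> blk c0 ms k = t"
  unfolding blk_def pair_block_halves[symmetric]
  by (rule the_equality) (auto intro: pair_block_unique)

lemma blk_bounds:
  assumes "c0 \<le> k" "k < c0 + 2 * sum_list ms"
  shows "blk c0 ms k < length ms" "k \<in> pair_block c0 ms (blk c0 ms k)"
  using pair_block_exists[OF assms] blk_eqI by metis+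

lemma sum_pair_blocks_containing:
  assumes "k < c0 + 2 * sum_list ms"
  shows "(\<Sum>t<length ms. if k \<in> pair_block c0 ms t then f t else 0)
    = (if c0 \<le> k then f (blk c0 ms k) else 0)"
proof (cases "c0 \<le> k")
  case True
  have "k \<in> pair_block c0 ms t \<longleftrightarrow> t = blk c0 ms k" if "t < length ms" for t
    using that blk_eqI blk_bounds[OF True assms] by metis
  then have "(\<Sum>t<length ms. if k \<in> pair_block c0 ms t then f t else 0)
      = (\<Sum>t<length ms. if t = blk c0 ms k then f t else 0)"
    by (intro sum.cong) auto
  then show ?thesis
    using True blk_bounds[OF True assms] by simp
next
  case False
  then show ?thesis
    using not_in_pair_block[of k c0 ms] by simp
qed

definition block_sign :: "nat \<Rightarrow> nat list \<Rightarrow> nat \<Rightarrow> complex" where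
  "block_sign c0 ms k = (if k < offs c0 ms (blk c0 ms k) + ms ! blk c0 ms k then 1 else -1)"

lemma block_sign_odd:
  assumes "t < length ms" "k \<in> cls c0 ms (2*t+1)"
  shows "block_sign c0 ms k = 1"
proof -
  have "blk c0 ms k = t"
    using assms pair_block_halves by (blast intro: blk_eqI)
  then show ?thesis
    using assms(2) by (simp add: block_sign_def cls_odd)
qed

lemma block_sign_even:
  assumes "t < length ms" "k \<in> cls c0 ms (2*t+2)"
  shows "block_sign c0 ms k = -1"
proof -
  have "blk c0 ms k = t"
    using assms pair_block_halves by (blast intro: blk_eqI)
  then show ?thesis
    using assms(2) by (simp add: block_sign_def cls_even)
qed

lemma block_sign_square: "block_sign c0 ms k * block_sign c0 ms k = 1"
  by (simp add: block_sign_def)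

lemma cnj_block_sign: "cnj (block_sign c0 ms k) = block_sign c0 ms k"
  by (simp add: block_sign_def)

definition signed_sum :: "nat \<Rightarrow> nat list \<Rightarrow> nat \<Rightarrow> (nat \<Rightarrow> complex) \<Rightarrow> complex" where
  "signed_sum c0 ms t h = (\<Sum>k\<in>pair_block c0 ms t. block_sign c0 ms k * h k)"

lemma signed_sum_halves:
  assumes "t < length ms"
  shows "signed_sum c0 ms t h = (\<Sum>k\<in>cls c0 ms (2*t+1). h k) - (\<Sum>k\<in>cls c0 ms (2*t+2). h k)"
proof -
  have "signed_sum c0 ms t h
      = (\<Sum>k\<in>cls c0 ms (2*t+1). block_sign c0 ms k * h k) + (\<Sum>k\<in>cls c0 ms (2*t+2). block_sign c0 ms k * h k)"
    unfolding signed_sum_def pair_block_halves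
    by (rule sum.union_disjoint) (auto simp: cls_odd cls_even)
  then show ?thesis
    using block_sign_odd[OF assms] block_sign_even[OF assms] by (simp add: sum_negf)
qed

lemma signed_sum_cong:
  "(\<And>k. k \<in> pair_block c0 ms t \<Longrightarrow> h k = h' k) \<Longrightarrow> signed_sum c0 ms t h = signed_sum c0 ms t h'"
  unfolding signed_sum_def by simp

lemma signed_sum_scale: "signed_sum c0 ms t (\<lambda>k. c * h k) = c * signed_sum c0 ms t h"
  unfolding signed_sum_def by (simp add: sum_distrib_left ac_simps)

lemma signed_sum_cnj: "signed_sum c0 ms t (\<lambda>k. cnj (h k)) = cnj (signed_sum c0 ms t h)"
  unfolding signed_sum_def by (simp add: cnj_block_sign)

lemma signed_sum_swap:
  "signed_sum c0 ms s (\<lambda>k. signed_sum c0 ms t (h k)) = signed_sum c0 ms t (\<lambda>l. signed_sum c0 ms s (\<lambda>k. h k l))"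
  unfolding signed_sum_def by (simp add: sum_distrib_left ac_simps sum.swap[of _ "pair_block c0 ms s"])

lemma signed_sum_sign:
  "signed_sum c0 ms t (\<lambda>k. block_sign c0 ms k * c) = 2 * of_nat (ms ! t) * c"
  unfolding signed_sum_def by (simp add: mult.assoc[symmetric] block_sign_square pair_block_def)

section \<open>The matrix Q_alpha\<close>

(* The paper's block Q_m is I - sigma sigma^T / m with sigma = block_sign. *)
definition R_coef :: "nat \<Rightarrow> nat list \<Rightarrow> nat \<Rightarrow> nat \<Rightarrow> complex" where
  "R_coef c0 ms i j = (\<Sum>t<length ms.
     if i \<in> pair_block c0 ms t \<and> j \<in> pair_block c0 ms t
     then block_sign c0 ms i * block_sign c0 ms j / of_nat (ms ! t) else 0)"

lemma R_coef_sym: "R_coef c0 ms i j = R_coef c0 ms j i"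
  unfolding R_coef_def by (intro sum.cong) (auto simp: mult.commute)

lemma R_coef_C0: "i < c0 \<Longrightarrow> R_coef c0 ms i j = 0"
  by (simp add: R_coef_def not_in_pair_block)

lemma R_coef_in_block:
  assumes "t < length ms" "i \<in> pair_block c0 ms t"
  shows "R_coef c0 ms i j
    = (if j \<in> pair_block c0 ms t then block_sign c0 ms i * block_sign c0 ms j / of_nat (ms ! t) else 0)"
proof -
  have "R_coef c0 ms i j = (\<Sum>t<length ms. if i \<in> pair_block c0 ms t then
      (if j \<in> pair_block c0 ms t then block_sign c0 ms i * block_sign c0 ms j / of_nat (ms ! t) else 0) else 0)"
    unfolding R_coef_def by (intro sum.cong) auto
  then show ?thesis
    using assms pair_block_bounds[OF assms] blk_eqI[OF assms]
    by (simp add: sum_pair_blocks_containing)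
qed

lemma sum_R_coef:
  assumes "c0 \<le> i" "i < c0 + 2 * sum_list ms"
  shows "(\<Sum>k<c0 + 2 * sum_list ms. R_coef c0 ms i k * h k)
    = block_sign c0 ms i / of_nat (ms ! blk c0 ms i) * signed_sum c0 ms (blk c0 ms i) h"
proof -
  define s where "s = blk c0 ms i"
  have s: "s < length ms" "i \<in> pair_block c0 ms s"
    using blk_bounds[OF assms] unfolding s_def by auto
  have "(\<Sum>k<c0 + 2 * sum_list ms. R_coef c0 ms i k * h k)
      = (\<Sum>k\<in>{..<c0 + 2 * sum_list ms} \<inter> pair_block c0 ms s.
          block_sign c0 ms i / of_nat (ms ! s) * (block_sign c0 ms k * h k))"
    by (auto simp: R_coef_in_block[OF s] sum.inter_restrict intro!: sum.cong)
  also have "{..<c0 + 2 * sum_list ms} \<inter> pair_block c0 ms s = pair_block c0 ms s"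
    using pair_block_bounds[OF s(1)] by blast
  finally have "(\<Sum>k<c0 + 2 * sum_list ms. R_coef c0 ms i k * h k)
      = (\<Sum>k\<in>pair_block c0 ms s. block_sign c0 ms i / of_nat (ms ! s) * (block_sign c0 ms k * h k))" .
  then show ?thesis
    unfolding s_def[symmetric] signed_sum_def sum_distrib_left .
qed

lemma sum_R_coef_right:
  assumes "c0 \<le> j" "j < c0 + 2 * sum_list ms"
  shows "(\<Sum>l<c0 + 2 * sum_list ms. h l * R_coef c0 ms l j)
    = block_sign c0 ms j / of_nat (ms ! blk c0 ms j) * signed_sum c0 ms (blk c0 ms j) h"
  using sum_R_coef[OF assms, of h] by (simp add: R_coef_sym mult.commute)

lemma R_coef_square:
  assumes "i < c0 + 2 * sum_list ms" "j < c0 + 2 * sum_list ms" and "\<forall>m\<in>set ms. m \<ge> 1"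
  shows "(\<Sum>k<c0 + 2 * sum_list ms. R_coef c0 ms i k * R_coef c0 ms k j) = 2 * R_coef c0 ms i j"
proof (cases "c0 \<le> i")
  case True
  define s where "s = blk c0 ms i"
  have s: "s < length ms" "i \<in> pair_block c0 ms s"
    using blk_bounds[OF True assms(1)] unfolding s_def by auto
  define c where "c = (if j \<in> pair_block c0 ms s then block_sign c0 ms j / of_nat (ms ! s) else 0)"
  have "(\<Sum>k<c0 + 2 * sum_list ms. R_coef c0 ms i k * R_coef c0 ms k j)
      = block_sign c0 ms i / of_nat (ms ! s) * signed_sum c0 ms s (\<lambda>k. R_coef c0 ms k j)"
    unfolding s_def by (rule sum_R_coef[OF True assms(1)])
  also have "signed_sum c0 ms s (\<lambda>k. R_coef c0 ms k j) = signed_sum c0 ms s (\<lambda>k. block_sign c0 ms k * c)"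
    by (rule signed_sum_cong) (simp add: R_coef_in_block[OF s(1)] c_def)
  also have "\<dots> = 2 * of_nat (ms ! s) * c"
    by (rule signed_sum_sign)
  finally show ?thesis
    using R_coef_in_block[OF s, of j] assms(3) s(1) nth_mem[OF s(1)] by (auto simp: c_def)
next
  case False
  then show ?thesis
    by (simp add: R_coef_C0)
qed

lemma Q_coef_eq:
  assumes "i < c0 + 2 * sum_list ms" "j < c0 + 2 * sum_list ms"
  shows "Q_coef c0 ms i j = of_bool (i = j) - R_coef c0 ms i j"
proof (cases "i < c0 \<and> j < c0")
  case True
  then show ?thesis
    by (simp add: Q_coef_def R_coef_C0)
next
  case False
  have block_entry: "(if (i \<in> cls c0 ms (Suc (2*t))) = (j \<in> cls c0 ms (Suc (2*t)))
      then (if i = j then 1 else 0) - 1 / of_nat (ms ! t) else 1 / of_nat (ms ! t))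
    = of_bool (i = j) - block_sign c0 ms i * block_sign c0 ms j / of_nat (ms ! t)"
    if "t < length ms" "i \<in> pair_block c0 ms t" "j \<in> pair_block c0 ms t" for t
  proof -
    have "block_sign c0 ms k = (if k \<in> cls c0 ms (2*t+1) then 1 else -1)"
      if "k \<in> pair_block c0 ms t" for k
      using that block_sign_odd[OF \<open>t < length ms\<close>] block_sign_even[OF \<open>t < length ms\<close>]
      unfolding pair_block_halves by auto
    then show ?thesis
      using that by (cases "i \<in> cls c0 ms (2*t+1)"; cases "j \<in> cls c0 ms (2*t+1)") auto
  qed
  have "Q_coef c0 ms i j = (\<Sum>t<length ms. if i \<in> pair_block c0 ms t \<and> j \<in> pair_block c0 ms t
      then of_bool (i = j) - block_sign c0 ms i * block_sign c0 ms j / of_nat (ms ! t) else 0)"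
    unfolding Q_coef_def Let_def pair_block_def[symmetric] if_not_P[OF False]
    by (intro sum.cong refl) (simp add: block_entry)
  also have "\<dots> = (\<Sum>t<length ms. if i \<in> pair_block c0 ms t \<and> j \<in> pair_block c0 ms t
      then of_bool (i = j) else 0) - R_coef c0 ms i j"
    unfolding R_coef_def sum_subtractf[symmetric] by (intro sum.cong) auto
  also have "(\<Sum>t<length ms. if i \<in> pair_block c0 ms t \<and> j \<in> pair_block c0 ms t
      then of_bool (i = j) else 0) = (of_bool (i = j) :: complex)"
  proof (cases "i = j")
    case True
    then show ?thesis
      using False assms(1) sum_pair_blocks_containing[of i c0 ms "\<lambda>_. 1 :: complex"] by simp
  qed simp
  finally show ?thesis .
qed

lemma sandwich_identity_minus:
  fixes R F :: "nat \<Rightarrow> nat \<Rightarrow> 'a :: comm_ring_1"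
  assumes "i < N" "j < N"
  shows "(\<Sum>l<N. (\<Sum>k<N. (of_bool (i = k) - R i k) * F k l) * (of_bool (l = j) - R l j))
    = F i j - (\<Sum>k<N. R i k * F k j) - (\<Sum>l<N. F i l * R l j) + (\<Sum>l<N. (\<Sum>k<N. R i k * F k l) * R l j)"
proof -
  have left: "(\<Sum>k<N. (of_bool (i = k) - R i k) * F k l) = F i l - (\<Sum>k<N. R i k * F k l)" for l
    using assms(1) by (simp add: left_diff_distrib sum_subtractf)
  have right: "(\<Sum>l<N. H l * (of_bool (l = j) - R l j)) = H j - (\<Sum>l<N. H l * R l j)" for H
    using assms(2) by (simp add: right_diff_distrib sum_subtractf)
  show ?thesis
    unfolding left right by (simp add: left_diff_distrib sum_subtractf)
qed

lemma Q_coef_sandwich: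
  fixes F :: "nat \<Rightarrow> nat \<Rightarrow> complex"
  assumes "i < c0 + 2 * sum_list ms" "j < c0 + 2 * sum_list ms"
  defines "N \<equiv> c0 + 2 * sum_list ms"
  shows "(\<Sum>l<N. (\<Sum>k<N. Q_coef c0 ms i k * F k l) * Q_coef c0 ms l j)
    = F i j - (\<Sum>k<N. R_coef c0 ms i k * F k j) - (\<Sum>l<N. F i l * R_coef c0 ms l j)
      + (\<Sum>l<N. (\<Sum>k<N. R_coef c0 ms i k * F k l) * R_coef c0 ms l j)"
  using assms sandwich_identity_minus[of i N j "R_coef c0 ms" F] by (simp add: Q_coef_eq)

lemma Q_coef_square:
  assumes "i < c0 + 2 * sum_list ms" "j < c0 + 2 * sum_list ms" and "\<forall>m\<in>set ms. m \<ge> 1"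
  shows "(\<Sum>k<c0 + 2 * sum_list ms. Q_coef c0 ms i k * Q_coef c0 ms k j) = of_bool (i = j)"
proof -
  let ?N = "c0 + 2 * sum_list ms"
  have "(\<Sum>k<?N. Q_coef c0 ms i k * Q_coef c0 ms k j)
      = (\<Sum>k<?N. (of_bool (i = k) - R_coef c0 ms i k) * (of_bool (k = j) - R_coef c0 ms k j))"
    using assms by (intro sum.cong) (simp_all add: Q_coef_eq)
  also have "\<dots> = of_bool (i = j) - 2 * R_coef c0 ms i j + (\<Sum>k<?N. R_coef c0 ms i k * R_coef c0 ms k j)"
    using assms by (simp add: left_diff_distrib right_diff_distrib sum_subtractf)
  finally show ?thesis
    using R_coef_square[OF assms] by simp
qed

section \<open>Block matrices\<close>

definition block_mat :: "nat \<Rightarrow> nat \<Rightarrow> (nat \<Rightarrow> nat \<Rightarrow> nat \<Rightarrow> nat \<Rightarrow> 'a) \<Rightarrow> 'a mat" where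
  "block_mat n d X = mat (n*d) (n*d) (\<lambda>(I, J). X (I div d) (J div d) (I mod d) (J mod d))"

lemma block_index_bounds:
  fixes I :: nat
  assumes "I < n * d"
  shows "I div d < n" "I mod d < d"
proof -
  show "I div d < n"
    using assms by (simp add: less_mult_imp_div_less)
  have "d \<noteq> 0"
    using assms by (metis mult_0_right not_less_zero)
  then show "I mod d < d"
    by simp
qed

lemma block_mat_cong:
  assumes "\<And>i j a b. i < n \<Longrightarrow> j < n \<Longrightarrow> a < d \<Longrightarrow> b < d \<Longrightarrow> X i j a b = Y i j a b"
  shows "block_mat n d X = block_mat n d Y"
proof (rule eq_matI)
  fix I J
  assume "I < dim_row (block_mat n d Y)" "J < dim_col (block_mat n d Y)"
  then have "I < n * d" "J < n * d"
    by (auto simp: block_mat_def)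
  then show "block_mat n d X $$ (I, J) = block_mat n d Y $$ (I, J)"
    using assms block_index_bounds by (simp add: block_mat_def)
qed (simp_all add: block_mat_def)

lemma sum_lessThan_mult_div_mod:
  fixes n d :: nat
  shows "(\<Sum>K<n * d. f (K div d) (K mod d)) = (\<Sum>k<n. \<Sum>c<d. f k c)"
proof -
  have "(\<Sum>K\<in>{k*d..<k*d+d}. f (K div d) (K mod d)) = (\<Sum>c<d. f k c)" for k
  proof -
    have "(\<Sum>K\<in>{k*d..<k*d+d}. f (K div d) (K mod d)) = (\<Sum>c\<in>{0..<d}. f ((c + k*d) div d) ((c + k*d) mod d))"
      using sum.shift_bounds_nat_ivl[of "\<lambda>K. f (K div d) (K mod d)" 0 "k*d" d] by (simp add: add.commute)
    also have "\<dots> = (\<Sum>c<d. f k c)"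
      by (intro sum.cong) auto
    finally show ?thesis .
  qed
  then show ?thesis
    using sum.nat_group[of "\<lambda>K. f (K div d) (K mod d)" d n] by (simp add: mult.commute)
qed

lemma block_mat_mult:
  fixes X Y :: "nat \<Rightarrow> nat \<Rightarrow> nat \<Rightarrow> nat \<Rightarrow> 'a :: comm_semiring_0"
  shows "block_mat n d X * block_mat n d Y = block_mat n d (\<lambda>i j a b. \<Sum>k<n. \<Sum>c<d. X i k a c * Y k j c b)"
proof (rule eq_matI)
  fix I J
  assume "I < dim_row (block_mat n d (\<lambda>i j a b. \<Sum>k<n. \<Sum>c<d. X i k a c * Y k j c b))"
    "J < dim_col (block_mat n d (\<lambda>i j a b. \<Sum>k<n. \<Sum>c<d. X i k a c * Y k j c b))"
  then have "I < n * d" "J < n * d"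
    by (auto simp: block_mat_def)
  then have "(block_mat n d X * block_mat n d Y) $$ (I, J)
      = (\<Sum>K<n * d. X (I div d) (K div d) (I mod d) (K mod d) * Y (K div d) (J div d) (K mod d) (J mod d))"
    by (simp add: block_mat_def scalar_prod_def atLeast0LessThan)
  also have "\<dots> = (\<Sum>k<n. \<Sum>c<d. X (I div d) k (I mod d) c * Y k (J div d) c (J mod d))"
    by (rule sum_lessThan_mult_div_mod)
  finally show "(block_mat n d X * block_mat n d Y) $$ (I, J)
      = block_mat n d (\<lambda>i j a b. \<Sum>k<n. \<Sum>c<d. X i k a c * Y k j c b) $$ (I, J)"
    using \<open>I < n * d\<close> \<open>J < n * d\<close> by (simp add: block_mat_def)
qed (simp_all add: block_mat_def)

lemma scalar_block_mat_mult_left: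
  fixes X :: "nat \<Rightarrow> nat \<Rightarrow> nat \<Rightarrow> nat \<Rightarrow> 'a :: comm_semiring_1"
  shows "block_mat n d (\<lambda>i j a b. c i j * of_bool (a = b)) * block_mat n d X
    = block_mat n d (\<lambda>i j a b. \<Sum>k<n. c i k * X k j a b)"
  unfolding block_mat_mult by (rule block_mat_cong) (simp add: of_bool_def if_distrib if_distribR cong: if_cong)

lemma scalar_block_mat_mult_right:
  fixes X :: "nat \<Rightarrow> nat \<Rightarrow> nat \<Rightarrow> nat \<Rightarrow> 'a :: comm_semiring_1"
  shows "block_mat n d X * block_mat n d (\<lambda>i j a b. c i j * of_bool (a = b))
    = block_mat n d (\<lambda>i j a b. \<Sum>k<n. X i k a b * c k j)"
  unfolding block_mat_mult by (rule block_mat_cong) (simp add: of_bool_def if_distrib if_distribR cong: if_cong)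

lemma block_mat_one: "block_mat n d (\<lambda>i j a b. of_bool (i = j \<and> a = b)) = 1\<^sub>m (n * d)"
proof (rule eq_matI)
  fix I J
  assume "I < dim_row (1\<^sub>m (n * d) :: 'a mat)" "J < dim_col (1\<^sub>m (n * d) :: 'a mat)"
  moreover have "(I div d = J div d \<and> I mod d = J mod d) \<longleftrightarrow> I = J"
    by (metis div_mult_mod_eq)
  ultimately show "block_mat n d (\<lambda>i j a b. of_bool (i = j \<and> a = b)) $$ (I, J) = (1\<^sub>m (n * d) :: 'a mat) $$ (I, J)"
    by (simp add: block_mat_def)
qed (simp_all add: block_mat_def)

lemma char_poly_conj_involution:
  fixes P A :: "'a :: comm_ring_1 mat"
  assumes "P \<in> carrier_mat N N" "A \<in> carrier_mat N N" "P * P = 1\<^sub>m N"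
  shows "char_poly (P * A * P) = char_poly A"
proof (rule char_poly_similar)
  have "similar_mat_wit (P * A * P) A P P"
    using assms by (intro similar_mat_witI[OF assms(3) assms(3) refl]) auto
  then show "similar_mat (P * A * P) A"
    unfolding similar_mat_def by blast
qed

section \<open>Unitary representations and the group algebra\<close>

definition rep_entry :: "('g \<Rightarrow> complex mat) \<Rightarrow> 'g option \<Rightarrow> nat \<Rightarrow> nat \<Rightarrow> complex" where
  "rep_entry rho x a b = (case x of None \<Rightarrow> 0 | Some g \<Rightarrow> rho g $$ (a, b))"

lemma emb_apply: "emb x h = (if x = Some h then 1 else 0)"
  by (cases x) (auto simp: emb_def delta_def)

lemma pi_cg_emb:
  assumes "set_option x \<subseteq> carrier G" "a < d" "b < d"
  shows "pi_cg G d rho (emb x) $$ (a, b) = rep_entry rho x a b"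
proof (cases x)
  case (Some g)
  then have "{h \<in> carrier G. emb x h \<noteq> 0} = {g}"
    using assms(1) by (auto simp: emb_apply)
  then show ?thesis
    using Some assms by (simp add: pi_cg_def rep_entry_def emb_apply)
qed (use assms in \<open>simp add: pi_cg_def rep_entry_def emb_apply\<close>)

lemma pi_cg_sum_emb:
  assumes "finite W" "\<forall>w\<in>W. set_option (x w) \<subseteq> carrier G" "a < d" "b < d"
  shows "pi_cg G d rho (\<lambda>h. \<Sum>w\<in>W. emb (x w) h) $$ (a, b) = (\<Sum>w\<in>W. rep_entry rho (x w) a b)"
proof -
  let ?y = "\<lambda>h. \<Sum>w\<in>W. emb (x w) h"
  define S where "S = {g. \<exists>w\<in>W. x w = Some g}"
  have "S \<subseteq> (\<lambda>w. the (x w)) ` W"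
    unfolding S_def by force
  then have "finite S"
    using assms(1) finite_surj by blast
  have "S \<subseteq> carrier G"
    using assms(2) unfolding S_def by force
  have support: "{g \<in> carrier G. ?y g \<noteq> 0} \<subseteq> S"
  proof
    fix g
    assume "g \<in> {g \<in> carrier G. ?y g \<noteq> 0}"
    then obtain w where "w \<in> W" "emb (x w) g \<noteq> 0"
      by (auto intro: sum.not_neutral_contains_not_neutral)
    then show "g \<in> S"
      unfolding S_def by (auto simp: emb_apply split: if_splits)
  qed
  have "pi_cg G d rho ?y $$ (a, b) = (\<Sum>g\<in>{g \<in> carrier G. ?y g \<noteq> 0}. ?y g * rho g $$ (a, b))"
    using assms by (simp add: pi_cg_def)
  also have "\<dots> = (\<Sum>g\<in>S. ?y g * rho g $$ (a, b))"
    using \<open>S \<subseteq> carrier G\<close> by (intro sum.mono_neutral_left[OF \<open>finite S\<close> support]) auto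
  also have "\<dots> = (\<Sum>w\<in>W. \<Sum>g\<in>S. emb (x w) g * rho g $$ (a, b))"
    by (simp add: sum_distrib_right sum.swap[of _ S])
  also have "\<dots> = (\<Sum>w\<in>W. rep_entry rho (x w) a b)"
  proof (intro sum.cong refl)
    fix w
    assume "w \<in> W"
    show "(\<Sum>g\<in>S. emb (x w) g * rho g $$ (a, b)) = rep_entry rho (x w) a b"
    proof (cases "x w")
      case (Some g0)
      then have "g0 \<in> S"
        using \<open>w \<in> W\<close> unfolding S_def by blast
      have "(\<Sum>g\<in>S. emb (x w) g * rho g $$ (a, b)) = (\<Sum>g\<in>S. if g0 = g then rho g $$ (a, b) else 0)"
        using Some by (intro sum.cong) (auto simp: emb_apply)
      then show ?thesis
        using Some \<open>finite S\<close> \<open>g0 \<in> S\<close> by (simp add: rep_entry_def)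
    qed (simp add: emb_apply rep_entry_def)
  qed
  finally show ?thesis .
qed

lemma sum_emb_eq_card_smult_imp_eq:
  assumes "finite W" "(\<lambda>h. \<Sum>w\<in>W. emb (x w) h) = cg_smult (of_nat (card W)) (emb g)" "w \<in> W"
  shows "x w = g"
proof -
  have count: "of_nat (card {w \<in> W. x w = Some h}) = (of_nat (card W) :: complex) * emb g h" for h
    using fun_cong[OF assms(2), of h] assms(1)
    by (simp add: cg_smult_def emb_apply sum.inter_filter[symmetric])
  show ?thesis
  proof (cases "x w")
    case None
    show ?thesis
    proof (cases g)
      case (Some g0)
      then have "card {w \<in> W. x w = Some g0} = card W"
        using count[of g0] by (simp add: emb_apply)
      then have "{w \<in> W. x w = Some g0} = W"
        using assms(1) by (intro card_subset_eq) auto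
      then have "x w = Some g0"
        using assms(3) by blast
      with None show ?thesis
        by simp
    qed (simp add: None)
  next
    case (Some h)
    then have "card {w \<in> W. x w = Some h} \<noteq> 0"
      using assms(1,3) by auto
    then have "emb g h \<noteq> 0"
      using count[of h] by auto
    then show ?thesis
      using Some by (simp add: emb_apply split: if_splits)
  qed
qed

lemma pi_cg_smult_delta:
  assumes "g \<in> carrier G" "a < d" "b < d"
  shows "pi_cg G d rho (cg_smult c (delta g)) $$ (a, b) = c * rho g $$ (a, b)"
proof (cases "c = 0")
  case False
  then have "{h \<in> carrier G. cg_smult c (delta g) h \<noteq> 0} = {g}"
    using assms(1) by (auto simp: cg_smult_def delta_def)
  then show ?thesis
    using assms by (simp add: pi_cg_def cg_smult_def delta_def)
qed (use assms in \<open>simp add: pi_cg_def cg_smult_def\<close>)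

lemma unitary_rep_one:
  assumes "group G" "unitary_rep G d rho"
  shows "rho \<one>\<^bsub>G\<^esub> = 1\<^sub>m d"
proof -
  let ?A = "rho \<one>\<^bsub>G\<^esub>"
  have one: "\<one>\<^bsub>G\<^esub> \<in> carrier G"
    using assms(1) by (simp add: group.is_monoid monoid.one_closed)
  have A: "?A \<in> carrier_mat d d" "?A * conj_transpose ?A = 1\<^sub>m d"
    using assms(2) one by (simp_all add: unitary_rep_def)
  have "rho (\<one>\<^bsub>G\<^esub> \<otimes>\<^bsub>G\<^esub> \<one>\<^bsub>G\<^esub>) = ?A * ?A"
    using assms(2) one by (simp add: unitary_rep_def)
  then have AA: "?A * ?A = ?A"
    using monoid.l_one[OF group.is_monoid[OF assms(1)] one] by simp
  have "?A = ?A * (?A * conj_transpose ?A)"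
    using A by simp
  also have "\<dots> = (?A * ?A) * conj_transpose ?A"
    using A by (simp add: conj_transpose_def assoc_mult_mat[of _ d d _ d _ d])
  finally show ?thesis
    using AA A by simp
qed

lemma unitary_rep_inv:
  assumes "group G" "unitary_rep G d rho" "g \<in> carrier G"
  shows "rho (inv\<^bsub>G\<^esub> g) = conj_transpose (rho g)"
proof -
  let ?A = "rho g" and ?B = "rho (inv\<^bsub>G\<^esub> g)"
  have inv: "inv\<^bsub>G\<^esub> g \<in> carrier G"
    using assms by (simp add: group.inv_closed)
  have A: "?A \<in> carrier_mat d d" "?A * conj_transpose ?A = 1\<^sub>m d" and B: "?B \<in> carrier_mat d d"
    using assms(2,3) inv by (simp_all add: unitary_rep_def)
  have "?B * ?A = rho (inv\<^bsub>G\<^esub> g \<otimes>\<^bsub>G\<^esub> g)"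
    using assms(2,3) inv by (simp add: unitary_rep_def)
  then have BA: "?B * ?A = 1\<^sub>m d"
    using assms unitary_rep_one[OF assms(1,2)] by (simp add: group.l_inv)
  have "conj_transpose ?A = (?B * ?A) * conj_transpose ?A"
    using BA A by (simp add: conj_transpose_def)
  also have "\<dots> = ?B * (?A * conj_transpose ?A)"
    using A B by (simp add: conj_transpose_def assoc_mult_mat[of _ d d _ d _ d])
  finally show ?thesis
    using A B by simp
qed

lemma rep_entry_inv:
  assumes "group G" "unitary_rep G d rho" "set_option x \<subseteq> carrier G" "a < d" "b < d"
  shows "rep_entry rho (map_option (\<lambda>g. inv\<^bsub>G\<^esub> g) x) a b = cnj (rep_entry rho x b a)"
proof (cases x)
  case (Some g)
  then have "rho g \<in> carrier_mat d d"
    using assms(2,3) by (simp add: unitary_rep_def)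
  then show ?thesis
    using Some assms unitary_rep_inv[OF assms(1,2)] by (simp add: rep_entry_def conj_transpose_def)
qed (simp add: rep_entry_def)

lemma pi_mat_block_mat: "pi_mat G d rho n M = block_mat n d (\<lambda>i j a b. pi_cg G d rho (M i j) $$ (a, b))"
  by (simp add: pi_mat_def block_mat_def)

lemma pi_mat_adj_mat:
  assumes "\<And>i j. i < n \<Longrightarrow> j < n \<Longrightarrow> set_option (gam i j) \<subseteq> carrier G"
  shows "pi_mat G d rho n (adj_mat gam) = block_mat n d (\<lambda>i j a b. rep_entry rho (gam i j) a b)"
  unfolding pi_mat_block_mat adj_mat_def by (rule block_mat_cong) (simp add: pi_cg_emb assms)

lemma pi_mat_Q_alpha:
  assumes "group G" "unitary_rep G d rho"
  shows "pi_mat G d rho n (Q_alpha G c0 ms) = block_mat n d (\<lambda>i j a b. Q_coef c0 ms i j * of_bool (a = b))"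
  unfolding pi_mat_block_mat Q_alpha_def
  using assms by (intro block_mat_cong) (simp add: pi_cg_smult_delta unitary_rep_one group.is_monoid monoid.one_closed)

lemma pi_mat_Q_alpha_square:
  assumes "group G" "unitary_rep G d rho" "n = c0 + 2 * sum_list ms" "\<forall>m\<in>set ms. m \<ge> 1"
  shows "pi_mat G d rho n (Q_alpha G c0 ms) * pi_mat G d rho n (Q_alpha G c0 ms) = 1\<^sub>m (n * d)"
proof -
  have "pi_mat G d rho n (Q_alpha G c0 ms) * pi_mat G d rho n (Q_alpha G c0 ms)
      = block_mat n d (\<lambda>i j a b. \<Sum>k<n. Q_coef c0 ms i k * (Q_coef c0 ms k j * of_bool (a = b)))"
    unfolding pi_mat_Q_alpha[OF assms(1,2)] by (rule scalar_block_mat_mult_left)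
  also have "\<dots> = block_mat n d (\<lambda>i j a b. of_bool (i = j \<and> a = b))"
    using Q_coef_square assms(3,4) by (intro block_mat_cong) (simp add: mult.assoc[symmetric] sum_distrib_right[symmetric])
  finally show ?thesis
    by (simp add: block_mat_one)
qed

section \<open>Switching along a pi-WQH partition\<close>

lemma caseb_gains:
  assumes "caseb G c0 ms gam t v g1 g2"
  shows "u \<in> cls c0 ms (2*t+1) \<Longrightarrow> gam v u = g1" and "u \<in> cls c0 ms (2*t+2) \<Longrightarrow> gam v u = g2"
proof -
  have "(\<lambda>h. \<Sum>u\<in>cls c0 ms (2*t+1). emb (gam v u) h) = cg_smult (of_nat (card (cls c0 ms (2*t+1)))) (emb g1)"
    using assms by (simp add: caseb_def Psi_def card_cls_odd)
  then show "u \<in> cls c0 ms (2*t+1) \<Longrightarrow> gam v u = g1"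
    by (rule sum_emb_eq_card_smult_imp_eq[OF finite_cls])
  have "(\<lambda>h. \<Sum>u\<in>cls c0 ms (2*t+2). emb (gam v u) h) = cg_smult (of_nat (card (cls c0 ms (2*t+2)))) (emb g2)"
    using assms by (simp add: caseb_def Psi_def card_cls_even)
  then show "u \<in> cls c0 ms (2*t+2) \<Longrightarrow> gam v u = g2"
    by (rule sum_emb_eq_card_smult_imp_eq[OF finite_cls])
qed

locale wqh_partition =
  fixes G :: "('g, 'b) monoid_scheme" and d c0 n :: nat and ms :: "nat list"
    and gam :: "nat \<Rightarrow> nat \<Rightarrow> 'g option" and rho :: "'g \<Rightarrow> complex mat"
  assumes G_group: "group G"
    and n_eq: "n = c0 + 2 * sum_list ms"
    and ms_pos: "\<forall>m\<in>set ms. m \<ge> 1"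
    and gain_graph: "gain_graph G n gam"
    and unitary: "unitary_rep G d rho"
    and WQH: "pi_WQH G d rho c0 ms gam"
begin

abbreviation adj_entry :: "nat \<Rightarrow> nat \<Rightarrow> nat \<Rightarrow> nat \<Rightarrow> complex" where
  "adj_entry a b k l \<equiv> rep_entry rho (gam k l) a b"

lemma ms_nth_pos: "t < length ms \<Longrightarrow> of_nat (ms ! t) \<noteq> (0 :: complex)"
  using ms_pos nth_mem by fastforce

lemma gam_carrier: "set_option (gam v w) \<subseteq> carrier G"
  using gain_graph unfolding gain_graph_def by (cases "gam v w") auto

lemma gam_swap: "gam w v = map_option (\<lambda>g. inv\<^bsub>G\<^esub> g) (gam v w)"
proof (cases "gam v w")
  case None
  then show ?thesis
    using gain_graph unfolding gain_graph_def by (cases "gam w v") auto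
next
  case (Some g)
  then show ?thesis
    using gain_graph unfolding gain_graph_def by auto
qed

lemma adj_entry_swap: "a < d \<Longrightarrow> b < d \<Longrightarrow> adj_entry a b w v = cnj (adj_entry b a v w)"
  using rep_entry_inv[OF G_group unitary gam_carrier] by (simp add: gam_swap[of w v])

lemma signed_sum_row_Psi:
  assumes "t < length ms" "a < d" "b < d"
  shows "signed_sum c0 ms t (adj_entry a b v)
    = pi_cg G d rho (Psi c0 ms gam (2*t+1) v) $$ (a, b) - pi_cg G d rho (Psi c0 ms gam (2*t+2) v) $$ (a, b)"
proof -
  have "pi_cg G d rho (Psi c0 ms gam j v) $$ (a, b) = (\<Sum>w\<in>cls c0 ms j. adj_entry a b v w)" for j
    unfolding Psi_def using assms(2,3) gam_carrier by (intro pi_cg_sum_emb) (auto simp: finite_cls)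
  then show ?thesis
    using assms(1) by (simp add: signed_sum_halves)
qed

lemma WQH_same_class:
  assumes "i \<in> {1..2 * length ms}" "j \<in> {1..2 * length ms}" "v \<in> cls c0 ms i" "v' \<in> cls c0 ms i"
  shows "pi_cg G d rho (Psi c0 ms gam j v) = pi_cg G d rho (Psi c0 ms gam j v')"
  using WQH assms unfolding pi_WQH_def by blast

lemma WQH_paired_classes:
  assumes "s < length ms" "t < length ms" "v \<in> cls c0 ms (2*s+1)" "v' \<in> cls c0 ms (2*s+2)"
  shows "pi_cg G d rho (Psi c0 ms gam (2*t+1) v) = pi_cg G d rho (Psi c0 ms gam (2*t+2) v')"
    and "pi_cg G d rho (Psi c0 ms gam (2*t+2) v) = pi_cg G d rho (Psi c0 ms gam (2*t+1) v')"
  using WQH assms unfolding pi_WQH_def by blast+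

lemma WQH_C0:
  assumes "v < c0" "t < length ms"
  shows "Psi c0 ms gam (2*t+1) v = Psi c0 ms gam (2*t+2) v \<or> (\<exists>g1 g2. caseb G c0 ms gam t v g1 g2)"
proof -
  have "v \<in> cls c0 ms 0"
    using assms(1) by (simp add: cls_zero)
  then show ?thesis
    using WQH assms(2) unfolding pi_WQH_def by blast
qed

lemma row_signed_sum:
  assumes "s < length ms" "t < length ms" "k \<in> pair_block c0 ms s" "a < d" "b < d"
  shows "signed_sum c0 ms t (adj_entry a b k) = block_sign c0 ms k * signed_sum c0 ms t (adj_entry a b (offs c0 ms s))"
proof -
  have o: "offs c0 ms s \<in> cls c0 ms (2*s+1)"
    using ms_nth_pos[OF assms(1)] by (auto simp: cls_odd)
  have "k \<in> cls c0 ms (2*s+1) \<or> k \<in> cls c0 ms (2*s+2)"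
    using assms(3) pair_block_halves by blast
  then show ?thesis
  proof
    assume k: "k \<in> cls c0 ms (2*s+1)"
    have "2*s+1 \<in> {1..2 * length ms}" "2*t+1 \<in> {1..2 * length ms}" "2*t+2 \<in> {1..2 * length ms}"
      using assms(1,2) by auto
    then show ?thesis
      using WQH_same_class[OF _ _ k o] assms k by (simp add: signed_sum_row_Psi block_sign_odd)
  next
    assume k: "k \<in> cls c0 ms (2*s+2)"
    then show ?thesis
      using WQH_paired_classes[OF assms(1,2) o k] assms by (simp add: signed_sum_row_Psi block_sign_even)
  qed
qed

lemma col_signed_sum:
  assumes "s < length ms" "t < length ms" "l \<in> pair_block c0 ms t" "a < d" "b < d"
  shows "signed_sum c0 ms s (\<lambda>k. adj_entry a b k l)
    = block_sign c0 ms l * signed_sum c0 ms s (\<lambda>k. adj_entry a b k (offs c0 ms t))"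
proof -
  have swap: "adj_entry a b k w = cnj (adj_entry b a w k)" for k w
    using adj_entry_swap[OF assms(4,5)] .
  have "signed_sum c0 ms s (\<lambda>k. adj_entry a b k l) = cnj (signed_sum c0 ms s (adj_entry b a l))"
    by (simp only: swap signed_sum_cnj)
  also have "\<dots> = cnj (block_sign c0 ms l * signed_sum c0 ms s (adj_entry b a (offs c0 ms t)))"
    using row_signed_sum[OF assms(2,1,3,5,4)] by simp
  also have "\<dots> = block_sign c0 ms l * signed_sum c0 ms s (\<lambda>k. adj_entry a b k (offs c0 ms t))"
    by (simp only: swap signed_sum_cnj complex_cnj_mult cnj_block_sign)
  finally show ?thesis .
qed

lemma signed_sums_balanced:
  assumes "s < length ms" "t < length ms" "a < d" "b < d"
  shows "of_nat (ms ! t) * signed_sum c0 ms s (\<lambda>k. adj_entry a b k (offs c0 ms t))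
    = of_nat (ms ! s) * signed_sum c0 ms t (adj_entry a b (offs c0 ms s))"
proof -
  let ?E = "signed_sum c0 ms s (\<lambda>k. adj_entry a b k (offs c0 ms t))"
    and ?D = "signed_sum c0 ms t (adj_entry a b (offs c0 ms s))"
  let ?X = "signed_sum c0 ms t (\<lambda>l. signed_sum c0 ms s (\<lambda>k. adj_entry a b k l))"
  have "?X = signed_sum c0 ms t (\<lambda>l. block_sign c0 ms l * ?E)"
    using col_signed_sum[OF assms(1,2) _ assms(3,4)] by (rule signed_sum_cong)
  then have by_columns: "?X = 2 * of_nat (ms ! t) * ?E"
    by (simp only: signed_sum_sign)
  have "?X = signed_sum c0 ms s (\<lambda>k. signed_sum c0 ms t (adj_entry a b k))"
    by (rule signed_sum_swap[symmetric])
  also have "\<dots> = signed_sum c0 ms s (\<lambda>k. block_sign c0 ms k * ?D)"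
    using row_signed_sum[OF assms(1,2) _ assms(3,4)] by (rule signed_sum_cong)
  finally have by_rows: "?X = 2 * of_nat (ms ! s) * ?D"
    by (simp only: signed_sum_sign)
  have "2 * (of_nat (ms ! t) * ?E) = 2 * (of_nat (ms ! s) * ?D)"
    unfolding mult.assoc[symmetric] using by_columns by_rows by (rule trans[OF sym])
  then show ?thesis
    by simp
qed

lemma new_gain_cases:
  assumes "v < c0" "t < length ms" "blk c0 ms w = t"
  obtains (equal) "Psi c0 ms gam (2*t+1) v = Psi c0 ms gam (2*t+2) v" "new_gain G c0 ms gam v w = gam v w"
  | (swapped) g1 g2 where "caseb G c0 ms gam t v g1 g2"
      "new_gain G c0 ms gam v w = (if w \<in> cls c0 ms (2*t+1) then g2 else g1)"
proof (cases "Psi c0 ms gam (2*t+1) v = Psi c0 ms gam (2*t+2) v")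
  case True
  have "new_gain G c0 ms gam v w = gam v w"
    unfolding new_gain_def Let_def assms(3) if_P[OF True] ..
  with True show ?thesis
    by (rule equal)
next
  case False
  define p where "p = (SOME (g1, g2). caseb G c0 ms gam t v g1 g2)"
  obtain g1 g2 where "caseb G c0 ms gam t v g1 g2"
    using WQH_C0[OF assms(1,2)] False by blast
  then have "case p of (g1, g2) \<Rightarrow> caseb G c0 ms gam t v g1 g2"
    unfolding p_def by (intro someI_ex[of "\<lambda>(g1, g2). caseb G c0 ms gam t v g1 g2"]) auto
  then obtain g1 g2 where p: "p = (g1, g2)" and caseb: "caseb G c0 ms gam t v g1 g2"
    by (cases p) auto
  have "new_gain G c0 ms gam v w = (if w \<in> cls c0 ms (2*t+1) then g2 else g1)"
    unfolding new_gain_def Let_def assms(3) if_not_P[OF False] p_def[symmetric] p by simp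
  with caseb show ?thesis
    by (rule swapped)
qed

lemma new_gain_carrier:
  assumes "v < c0" "c0 \<le> w" "w < n"
  shows "set_option (new_gain G c0 ms gam v w) \<subseteq> carrier G"
proof -
  have "blk c0 ms w < length ms"
    using blk_bounds(1)[of c0 w ms] assms(2,3) n_eq by simp
  from assms(1) this refl show ?thesis
    by (cases rule: new_gain_cases) (auto simp: gam_carrier caseb_def)
qed

lemma new_gain_entry:
  assumes "v < c0" "c0 \<le> w" "w < n" "a < d" "b < d"
  defines "t \<equiv> blk c0 ms w"
  shows "rep_entry rho (new_gain G c0 ms gam v w) a b
    = adj_entry a b v w - block_sign c0 ms w / of_nat (ms ! t) * signed_sum c0 ms t (adj_entry a b v)"
proof -
  have t: "t < length ms" "w \<in> pair_block c0 ms t"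
    using blk_bounds[of c0 w ms] assms(2,3) n_eq unfolding t_def by auto
  have "blk c0 ms w = t"
    unfolding t_def ..
  with assms(1) t(1) show ?thesis
  proof (cases rule: new_gain_cases)
    case equal
    then show ?thesis
      using t(1) assms(4,5) by (simp add: signed_sum_row_Psi)
  next
    case (swapped g1 g2)
    note first = caseb_gains(1)[OF swapped(1)] and second = caseb_gains(2)[OF swapped(1)]
    have "signed_sum c0 ms t (adj_entry a b v)
        = (\<Sum>u\<in>cls c0 ms (2*t+1). rep_entry rho g1 a b) - (\<Sum>u\<in>cls c0 ms (2*t+2). rep_entry rho g2 a b)"
      using first second by (simp add: signed_sum_halves[OF t(1)])
    then have sum: "signed_sum c0 ms t (adj_entry a b v) = of_nat (ms ! t) * (rep_entry rho g1 a b - rep_entry rho g2 a b)"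
      by (simp add: card_cls_odd card_cls_even right_diff_distrib)
    have "w \<in> cls c0 ms (2*t+1) \<or> w \<in> cls c0 ms (2*t+2)"
      using t(2) pair_block_halves by blast
    then show ?thesis
    proof
      assume w: "w \<in> cls c0 ms (2*t+1)"
      then show ?thesis
        using swapped(2) sum first[OF w] block_sign_odd[OF t(1) w] ms_nth_pos[OF t(1)] by simp
    next
      assume w: "w \<in> cls c0 ms (2*t+2)"
      then have "w \<notin> cls c0 ms (2*t+1)"
        using halves_disjoint by blast
      then show ?thesis
        using swapped(2) sum second[OF w] block_sign_even[OF t(1) w] ms_nth_pos[OF t(1)] by simp
    qed
  qed
qed

lemma alpha_graph_carrier:
  assumes "i < n" "j < n"
  shows "set_option (alpha_graph G c0 ms gam i j) \<subseteq> carrier G"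
proof -
  consider "i < c0" "c0 \<le> j" | "c0 \<le> i" "j < c0" | "i < c0 \<longleftrightarrow> j < c0"
    by linarith
  then show ?thesis
  proof cases
    case 1
    then show ?thesis
      using assms new_gain_carrier[of i j] by (simp add: alpha_graph_def cls_zero n_eq)
  next
    case 2
    then have "set_option (new_gain G c0 ms gam j i) \<subseteq> carrier G"
      using assms new_gain_carrier[of j i] by simp
    then show ?thesis
      using 2 assms G_group by (auto simp: alpha_graph_def cls_zero n_eq group.inv_closed)
  next
    case 3
    then show ?thesis
      using gam_carrier[of i j] by (auto simp: alpha_graph_def cls_zero)
  qed
qed

lemma alpha_graph_entry_C0_block:
  assumes "i < c0" "c0 \<le> j" "j < n" "a < d" "b < d"
  shows "rep_entry rho (alpha_graph G c0 ms gam i j) a b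
    = adj_entry a b i j - (\<Sum>l<n. adj_entry a b i l * R_coef c0 ms l j)"
proof -
  have "j < c0 + 2 * sum_list ms"
    using assms(3) n_eq by simp
  then show ?thesis
    using assms new_gain_entry[OF assms] sum_R_coef_right[OF assms(2), of ms "adj_entry a b i"]
    by (simp add: alpha_graph_def cls_zero n_eq)
qed

lemma alpha_graph_entry_block_C0:
  assumes "c0 \<le> i" "i < n" "j < c0" "a < d" "b < d"
  shows "rep_entry rho (alpha_graph G c0 ms gam i j) a b
    = adj_entry a b i j - (\<Sum>k<n. R_coef c0 ms i k * adj_entry a b k j)"
proof -
  let ?s = "blk c0 ms i"
  have swap: "adj_entry b a j k = cnj (adj_entry a b k j)" for k
    using adj_entry_swap[OF assms(5,4)] .
  have "rep_entry rho (alpha_graph G c0 ms gam i j) a b = cnj (rep_entry rho (new_gain G c0 ms gam j i) b a)"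
    using assms rep_entry_inv[OF G_group unitary new_gain_carrier[OF assms(3,1,2)]]
    by (simp add: alpha_graph_def cls_zero n_eq)
  also have "\<dots> = cnj (adj_entry b a j i - block_sign c0 ms i / of_nat (ms ! ?s) * signed_sum c0 ms ?s (adj_entry b a j))"
    using new_gain_entry[OF assms(3,1,2,5,4)] by simp
  also have "\<dots> = adj_entry a b i j - block_sign c0 ms i / of_nat (ms ! ?s) * signed_sum c0 ms ?s (\<lambda>k. adj_entry a b k j)"
    by (simp add: swap signed_sum_cnj cnj_block_sign)
  also have "\<dots> = adj_entry a b i j - (\<Sum>k<n. R_coef c0 ms i k * adj_entry a b k j)"
    using assms(2) n_eq sum_R_coef[OF assms(1), of ms "\<lambda>k. adj_entry a b k j"] by simp
  finally show ?thesis .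
qed

lemma block_corrections_cancel:
  assumes "c0 \<le> i" "i < n" "c0 \<le> j" "j < n" "a < d" "b < d"
  shows "(\<Sum>k<n. R_coef c0 ms i k * adj_entry a b k j) + (\<Sum>l<n. adj_entry a b i l * R_coef c0 ms l j)
    = (\<Sum>l<n. (\<Sum>k<n. R_coef c0 ms i k * adj_entry a b k l) * R_coef c0 ms l j)"
proof -
  define s t where "s = blk c0 ms i" and "t = blk c0 ms j"
  have iN: "i < c0 + 2 * sum_list ms" and jN: "j < c0 + 2 * sum_list ms"
    using assms(2,4) n_eq by simp_all
  have s: "s < length ms" "i \<in> pair_block c0 ms s" and t: "t < length ms" "j \<in> pair_block c0 ms t"
    using blk_bounds[OF assms(1) iN] blk_bounds[OF assms(3) jN] unfolding s_def t_def by auto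
  define D E where "D = signed_sum c0 ms t (adj_entry a b (offs c0 ms s))"
    and "E = signed_sum c0 ms s (\<lambda>k. adj_entry a b k (offs c0 ms t))"
  let ?ms = "of_nat (ms ! s) :: complex" and ?mt = "of_nat (ms ! t) :: complex"
  have col: "signed_sum c0 ms s (\<lambda>k. adj_entry a b k l) = block_sign c0 ms l * E" if "l \<in> pair_block c0 ms t" for l
    using col_signed_sum[OF s(1) t(1) that assms(5,6)] unfolding E_def .
  have row_sums: "(\<Sum>k<n. R_coef c0 ms i k * h k) = block_sign c0 ms i / ?ms * signed_sum c0 ms s h" for h
    unfolding n_eq s_def by (rule sum_R_coef[OF assms(1) iN])
  have col_sums: "(\<Sum>l<n. h l * R_coef c0 ms l j) = block_sign c0 ms j / ?mt * signed_sum c0 ms t h" for h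
    unfolding n_eq t_def by (rule sum_R_coef_right[OF assms(3) jN])
  have T1: "(\<Sum>k<n. R_coef c0 ms i k * adj_entry a b k j) = block_sign c0 ms i / ?ms * (block_sign c0 ms j * E)"
    unfolding row_sums col[OF t(2)] ..
  have T2: "(\<Sum>l<n. adj_entry a b i l * R_coef c0 ms l j) = block_sign c0 ms j / ?mt * (block_sign c0 ms i * D)"
    unfolding col_sums row_signed_sum[OF s(1) t(1) s(2) assms(5,6)] D_def ..
  have "(\<Sum>l<n. (\<Sum>k<n. R_coef c0 ms i k * adj_entry a b k l) * R_coef c0 ms l j)
      = block_sign c0 ms j / ?mt * (block_sign c0 ms i / ?ms * signed_sum c0 ms t (\<lambda>l. signed_sum c0 ms s (\<lambda>k. adj_entry a b k l)))"
    unfolding row_sums col_sums signed_sum_scale ..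
  also have "signed_sum c0 ms t (\<lambda>l. signed_sum c0 ms s (\<lambda>k. adj_entry a b k l))
      = signed_sum c0 ms t (\<lambda>l. block_sign c0 ms l * E)"
    using col by (rule signed_sum_cong)
  also have "\<dots> = 2 * ?mt * E"
    by (rule signed_sum_sign)
  finally have T3: "(\<Sum>l<n. (\<Sum>k<n. R_coef c0 ms i k * adj_entry a b k l) * R_coef c0 ms l j)
      = block_sign c0 ms j / ?mt * (block_sign c0 ms i / ?ms * (2 * ?mt * E))" .
  have "?ms * D = ?mt * E"
    using signed_sums_balanced[OF s(1) t(1) assms(5,6)] unfolding D_def E_def by (rule sym)
  then have D_eq: "D = ?mt * E / ?ms"
    using ms_nth_pos[OF s(1)] by (simp add: eq_divide_eq mult.commute)
  show ?thesis
    unfolding T1 T2 T3 D_eq using ms_nth_pos[OF s(1)] ms_nth_pos[OF t(1)] by (simp add: field_simps)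
qed

lemma alpha_graph_entry:
  assumes "i < n" "j < n" "a < d" "b < d"
  shows "rep_entry rho (alpha_graph G c0 ms gam i j) a b
    = (\<Sum>l<n. (\<Sum>k<n. Q_coef c0 ms i k * adj_entry a b k l) * Q_coef c0 ms l j)"
proof -
  have sandwich: "(\<Sum>l<n. (\<Sum>k<n. Q_coef c0 ms i k * adj_entry a b k l) * Q_coef c0 ms l j)
      = adj_entry a b i j - (\<Sum>k<n. R_coef c0 ms i k * adj_entry a b k j)
        - (\<Sum>l<n. adj_entry a b i l * R_coef c0 ms l j)
        + (\<Sum>l<n. (\<Sum>k<n. R_coef c0 ms i k * adj_entry a b k l) * R_coef c0 ms l j)"
    using Q_coef_sandwich[of i c0 ms j] assms(1,2) n_eq by simp
  have R_left: "R_coef c0 ms i k = 0" if "i < c0" for k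
    using that by (rule R_coef_C0)
  have R_right: "R_coef c0 ms l j = 0" if "j < c0" for l
    using that R_coef_C0 R_coef_sym by metis
  consider "i < c0" "j < c0" | "i < c0" "c0 \<le> j" | "c0 \<le> i" "j < c0" | "c0 \<le> i" "c0 \<le> j"
    by linarith
  then show ?thesis
  proof cases
    case 1
    then show ?thesis
      using sandwich R_left R_right by (simp add: alpha_graph_def cls_zero)
  next
    case 2
    then show ?thesis
      using sandwich R_left alpha_graph_entry_C0_block assms by simp
  next
    case 3
    then show ?thesis
      using sandwich R_right alpha_graph_entry_block_C0 assms by simp
  next
    case 4
    have "(\<Sum>l<n. (\<Sum>k<n. Q_coef c0 ms i k * adj_entry a b k l) * Q_coef c0 ms l j) = adj_entry a b i j"
      unfolding sandwich diff_diff_eq block_corrections_cancel[OF 4(1) assms(1) 4(2) assms(2-4)] by simp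
    then show ?thesis
      using 4 by (simp add: alpha_graph_def cls_zero)
  qed
qed

lemma pi_mat_alpha_graph:
  "pi_mat G d rho n (adj_mat (alpha_graph G c0 ms gam))
    = pi_mat G d rho n (Q_alpha G c0 ms) * pi_mat G d rho n (adj_mat gam) * pi_mat G d rho n (Q_alpha G c0 ms)"
proof -
  have "pi_mat G d rho n (adj_mat gam) = block_mat n d (\<lambda>k l a b. adj_entry a b k l)"
    by (rule pi_mat_adj_mat) (rule gam_carrier)
  then have "pi_mat G d rho n (Q_alpha G c0 ms) * pi_mat G d rho n (adj_mat gam) * pi_mat G d rho n (Q_alpha G c0 ms)
      = block_mat n d (\<lambda>i j a b. \<Sum>l<n. (\<Sum>k<n. Q_coef c0 ms i k * adj_entry a b k l) * Q_coef c0 ms l j)"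
    by (simp add: pi_mat_Q_alpha[OF G_group unitary] scalar_block_mat_mult_left scalar_block_mat_mult_right)
  also have "\<dots> = block_mat n d (\<lambda>i j a b. rep_entry rho (alpha_graph G c0 ms gam i j) a b)"
    by (rule block_mat_cong) (simp add: alpha_graph_entry)
  also have "\<dots> = pi_mat G d rho n (adj_mat (alpha_graph G c0 ms gam))"
    by (rule pi_mat_adj_mat[symmetric]) (rule alpha_graph_carrier)
  finally show ?thesis ..
qed

end

theorem mainTheorem3:
  fixes G :: "('g, 'b) monoid_scheme" and d c0 n :: nat and ms :: "nat list"
    and gam :: "nat \<Rightarrow> nat \<Rightarrow> 'g option" and rho :: "'g \<Rightarrow> complex mat"
  assumes "group G"
    and "n = c0 + 2 * sum_list ms"
    and "\<forall>m\<in>set ms. m \<ge> 1"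
    and "gain_graph G n gam"
    and "unitary_rep G d rho"
    and "pi_WQH G d rho c0 ms gam"
  shows "pi_mat G d rho n (adj_mat (alpha_graph G c0 ms gam))
           = pi_mat G d rho n (Q_alpha G c0 ms) * pi_mat G d rho n (adj_mat gam) * pi_mat G d rho n (Q_alpha G c0 ms)
         \<and> pi_cospectral G d rho n gam (alpha_graph G c0 ms gam)"
proof -
  interpret wqh_partition G d c0 n ms gam rho
    by (rule wqh_partition.intro[OF assms])
  let ?Q = "pi_mat G d rho n (Q_alpha G c0 ms)" and ?A = "pi_mat G d rho n (adj_mat gam)"
  have "char_poly (?Q * ?A * ?Q) = char_poly ?A"
    using pi_mat_Q_alpha_square[OF assms(1,5,2,3)] by (intro char_poly_conj_involution) (auto simp: pi_mat_def)
  then show ?thesis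
    unfolding pi_cospectral_def pi_spectrum_def pi_mat_alpha_graph by simp
qed

end
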